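(* If $\Gamma\vdash t:A$ is derivable in the simply typed distributive $\lambda$-calculus and $\theta$ is a substitution valid with respect to $\Gamma$, then $\theta t\in[\![A]\!]$.
   Context: Terms: $t,s,u ::= x \mid \lambda x.t \mid ts \mid \langle t,s\rangle \mid \pi_1 t \mid \pi_2 t$ (up to $\alpha$-renaming); $t\{x:=s\}$ is capture-avoiding substitution, and for a substitution $\theta$ (a map from variables to terms), $\theta t$ is the simultaneous capture-avoiding substitution. Top-level rules: $(\lambda x.t)s \mapsto t\{x:=s\}$; $\pi_i\langle t_1,t_2\rangle \mapsto t_i$ ($i=1,2$); $\langle t,s\rangle u \mapsto \langle tu, su\rangle$; $\pi_i(\lambda x.t)\mapsto \lambda x.\pi_i t$ ($i=1,2$); $\to_{\mathsf{dist}}$ is the closure of these rules under all term constructors; $\mathrm{SN}$ is the set of strongly normalizing terms. Types: $A ::= \tau \mid A\Rightarrow A \mid A\wedge A$ with $\tau$ a single atomic type. The relation $\equiv$ on types is the smallest equivalence relation containing $A\Rightarrow (B\wedge C)\equiv (A\Rightarrow B)\wedge(A\Rightarrow C)$ and closed under congruence for $\Rightarrow$ and $\wedge$. Typing rules: $\Gamma,x:A\vdash x:A$; if $\Gamma\vdash t:A$ and $A\equiv B$ then $\Gamma\vdash t:B$; if $\Gamma,x:A\vdash t:B$ then $\Gamma\vdash \lambda x.t:A\Rightarrow B$; if $\Gamma\vdash t:A\Rightarrow B$ and $\Gamma\vdash s:A$ then $\Gamma\vdash ts:B$; if $\Gamma\vdash t:A$ and $\Gamma\vdash s:B$ then $\Gamma\vdash\langle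 t,s\rangle:A\wedge B$; if $\Gamma\vdash t:A\wedge B$ then $\Gamma\vdash\pi_1 t:A$ and $\Gamma\vdash \pi_2 t:B$. Interpretation: $[\![\tau]\!]=\mathrm{SN}$; $[\![A\Rightarrow B]\!]=\{t\mid \forall s\in[\![A]\!],\ ts\in[\![B]\!]\}$; $[\![A\wedge B]\!]=\{t\mid \pi_1t\in[\![A]\!]\text{ and }\pi_2 t\in[\![B]\!]\}$. A substitution $\theta$ is valid with respect to $\Gamma$ if $\theta x\in[\![A]\!]$ for every $x:A\in\Gamma$. *)

theory Defs
  imports Main
begin

text \<open>Terms of the distributive lambda-calculus, with de Bruijn indices
  (so terms are identified up to alpha-renaming).\<close>
datatype dterm = Var nat | Lam dterm | App dterm dterm
  | Pair dterm dterm | Proj1 dterm | Proj2 dterm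

fun lift :: "dterm \<Rightarrow> nat \<Rightarrow> dterm" where
  "lift (Var i) k = (if i < k then Var i else Var (Suc i))"
| "lift (Lam t) k = Lam (lift t (Suc k))"
| "lift (App t s) k = App (lift t k) (lift s k)"
| "lift (Pair t s) k = Pair (lift t k) (lift s k)"
| "lift (Proj1 t) k = Proj1 (lift t k)"
| "lift (Proj2 t) k = Proj2 (lift t k)"

fun subst :: "dterm \<Rightarrow> dterm \<Rightarrow> nat \<Rightarrow> dterm" where
  "subst (Var i) s k = (if k < i then Var (i - 1) else if i = k then s else Var i)"
| "subst (Lam t) s k = Lam (subst t (lift s 0) (Suc k))"
| "subst (App t u) s k = App (subst t s k) (subst u s k)"
| "subst (Pair t u) s k = Pair (subst t s k) (subst u s k)"
| "subst (Proj1 t) s k = Proj1 (subst t s k)"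
| "subst (Proj2 t) s k = Proj2 (subst t s k)"

fun substs :: "(nat \<Rightarrow> dterm) \<Rightarrow> dterm \<Rightarrow> dterm" where
  "substs \<theta> (Var i) = \<theta> i"
| "substs \<theta> (Lam t) = Lam (substs (\<lambda>i. case i of 0 \<Rightarrow> Var 0 | Suc j \<Rightarrow> lift (\<theta> j) 0) t)"
| "substs \<theta> (App t s) = App (substs \<theta> t) (substs \<theta> s)"
| "substs \<theta> (Pair t s) = Pair (substs \<theta> t) (substs \<theta> s)"
| "substs \<theta> (Proj1 t) = Proj1 (substs \<theta> t)"
| "substs \<theta> (Proj2 t) = Proj2 (substs \<theta> t)"

inductive dist :: "dterm \<Rightarrow> dterm \<Rightarrow> bool" (infix "\<rightarrow>\<^sub>d" 50) where
  beta: "App (Lam t) s \<rightarrow>\<^sub>d subst t s 0"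
| proj1: "Proj1 (Pair t s) \<rightarrow>\<^sub>d t"
| proj2: "Proj2 (Pair t s) \<rightarrow>\<^sub>d s"
| app_pair: "App (Pair t s) u \<rightarrow>\<^sub>d Pair (App t u) (App s u)"
| proj1_lam: "Proj1 (Lam t) \<rightarrow>\<^sub>d Lam (Proj1 t)"
| proj2_lam: "Proj2 (Lam t) \<rightarrow>\<^sub>d Lam (Proj2 t)"
| lam: "t \<rightarrow>\<^sub>d t' \<Longrightarrow> Lam t \<rightarrow>\<^sub>d Lam t'"
| appL: "t \<rightarrow>\<^sub>d t' \<Longrightarrow> App t s \<rightarrow>\<^sub>d App t' s"
| appR: "s \<rightarrow>\<^sub>d s' \<Longrightarrow> App t s \<rightarrow>\<^sub>d App t s'"
| pairL: "t \<rightarrow>\<^sub>d t' \<Longrightarrow> Pair t s \<rightarrow>\<^sub>d Pair t' s"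
| pairR: "s \<rightarrow>\<^sub>d s' \<Longrightarrow> Pair t s \<rightarrow>\<^sub>d Pair t s'"
| proj1c: "t \<rightarrow>\<^sub>d t' \<Longrightarrow> Proj1 t \<rightarrow>\<^sub>d Proj1 t'"
| proj2c: "t \<rightarrow>\<^sub>d t' \<Longrightarrow> Proj2 t \<rightarrow>\<^sub>d Proj2 t'"

definition SN :: "dterm set" where
  "SN = Wellfounded.acc {(s, t). t \<rightarrow>\<^sub>d s}"

datatype ty = Tau | Arr ty ty | And ty ty

inductive teq :: "ty \<Rightarrow> ty \<Rightarrow> bool" where
  dist_ax: "teq (Arr A (And B C)) (And (Arr A B) (Arr A C))"
| refl: "teq A A"
| sym: "teq A B \<Longrightarrow> teq B A"
| trans: "teq A B \<Longrightarrow> teq B C \<Longrightarrow> teq A C"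
| cong_arr: "teq A A' \<Longrightarrow> teq B B' \<Longrightarrow> teq (Arr A B) (Arr A' B')"
| cong_and: "teq A A' \<Longrightarrow> teq B B' \<Longrightarrow> teq (And A B) (And A' B')"

text \<open>Typing; contexts are lists, index i refers to the i-th entry (innermost first).\<close>
inductive typing :: "ty list \<Rightarrow> dterm \<Rightarrow> ty \<Rightarrow> bool" where
  ax: "i < length \<Gamma> \<Longrightarrow> \<Gamma> ! i = A \<Longrightarrow> typing \<Gamma> (Var i) A"
| conv: "typing \<Gamma> t A \<Longrightarrow> teq A B \<Longrightarrow> typing \<Gamma> t B"
| abs: "typing (A # \<Gamma>) t B \<Longrightarrow> typing \<Gamma> (Lam t) (Arr A B)"
| app: "typing \<Gamma> t (Arr A B) \<Longrightarrow> typing \<Gamma> s A \<Longrightarrow> typing \<Gamma> (App t s) B"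
| pair: "typing \<Gamma> t A \<Longrightarrow> typing \<Gamma> s B \<Longrightarrow> typing \<Gamma> (Pair t s) (And A B)"
| fst: "typing \<Gamma> t (And A B) \<Longrightarrow> typing \<Gamma> (Proj1 t) A"
| snd: "typing \<Gamma> t (And A B) \<Longrightarrow> typing \<Gamma> (Proj2 t) B"

fun interp :: "ty \<Rightarrow> dterm set" where
  "interp Tau = SN"
| "interp (Arr A B) = {t. \<forall>s\<in>interp A. App t s \<in> interp B}"
| "interp (And A B) = {t. Proj1 t \<in> interp A \<and> Proj2 t \<in> interp B}"

definition valid :: "(nat \<Rightarrow> dterm) \<Rightarrow> ty list \<Rightarrow> bool" where
  "valid \<theta> \<Gamma> \<longleftrightarrow> (\<forall>i < length \<Gamma>. \<theta> i \<in> interp (\<Gamma> ! i))"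

end

theory Submission
  imports Defs
begin

text \<open>Tait--Girard reducibility: every \<open>\<lbrakk>A\<rbrakk>\<close> is a reducibility candidate, i.e. a set of
  strongly normalising terms that is closed under reduction and contains every neutral term all
  of whose one-step reducts lie in it. The new point compared with the simply typed calculus is
  that \<open>\<lbrakk>\<cdot>\<rbrakk>\<close> must respect \<open>\<equiv>\<close>, i.e. \<open>\<lbrakk>A \<Rightarrow> B \<and> C\<rbrakk> = \<lbrakk>(A \<Rightarrow> B) \<and> (A \<Rightarrow> C)\<rbrakk>\<close>.
  This amounts to \<open>(\<pi>\<^sub>i t) s\<close> and \<open>\<pi>\<^sub>i (t s)\<close> lying in the same candidates, which is proved
  by induction on the strong normalisation of \<open>t\<close> and \<open>s\<close>; the distributivity rules
  \<open>\<langle>t\<^sub>1, t\<^sub>2\<rangle> s \<mapsto> \<langle>t\<^sub>1 s, t\<^sub>2 s\<rangle>\<close> and \<open>\<pi>\<^sub>i (\<lambda>x. u) \<mapsto> \<lambda>x. \<pi>\<^sub>i u\<close> are what make the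
  reducts of the two terms match up.\<close>

lemma lift_lift:
  "i \<le> k \<Longrightarrow> lift (lift t i) (Suc k) = lift (lift t k) i"
  by (induct t arbitrary: i k) auto

lemma lift_subst [simp]:
  "j \<le> i \<Longrightarrow> lift (subst t s j) i = subst (lift t (Suc i)) (lift s i) j"
  by (induct t arbitrary: i j s) (auto simp: lift_lift)

lemma lift_subst_lt:
  "i \<le> j \<Longrightarrow> lift (subst t s j) i = subst (lift t i) (lift s i) (Suc j)"
  by (induct t arbitrary: i j s) (auto simp: lift_lift)

lemma subst_lift [simp]: "subst (lift t k) s k = t"
  by (induct t arbitrary: k s) auto

lemma subst_subst:
  "i \<le> j \<Longrightarrow>
    subst (subst t (lift v i) (Suc j)) (subst u v j) i = subst (subst t u i) v j"
  by (induct t arbitrary: i j u v) (auto simp: lift_lift [symmetric] lift_subst_lt)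

lemma subst_substs: "subst (substs \<theta> t) s k = substs (\<lambda>i. subst (\<theta> i) s k) t"
proof (induct t arbitrary: \<theta> s k)
  case (Lam t)
  have "(\<lambda>i. subst (case i of 0 \<Rightarrow> Var 0 | Suc j \<Rightarrow> lift (\<theta> j) 0) (lift s 0) (Suc k))
      = (\<lambda>i. case i of 0 \<Rightarrow> Var 0 | Suc j \<Rightarrow> lift (subst (\<theta> j) s k) 0)"
    by (auto simp: lift_subst_lt split: nat.split)
  with Lam show ?case by simp
qed simp_all

lemma subst_substs_lifted:
  "subst (substs (case_nat (Var 0) (\<lambda>j. lift (\<theta> j) 0)) t) s 0 = substs (case_nat s \<theta>) t"
proof -
  have "(\<lambda>i. subst (case_nat (Var 0) (\<lambda>j. lift (\<theta> j) 0) i) s 0) = case_nat s \<theta>"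
    by (auto split: nat.split)
  then show ?thesis by (simp add: subst_substs)
qed

declare dist.intros [intro]

lemma lift_dist: "t \<rightarrow>\<^sub>d t' \<Longrightarrow> lift t k \<rightarrow>\<^sub>d lift t' k"
proof (induct arbitrary: k rule: dist.induct)
  case (beta t s)
  show ?case using dist.beta [of "lift t (Suc k)" "lift s k"] by simp
qed auto

lemma subst_dist: "t \<rightarrow>\<^sub>d t' \<Longrightarrow> subst t s k \<rightarrow>\<^sub>d subst t' s k"
proof (induct arbitrary: s k rule: dist.induct)
  case (beta t u)
  show ?case
    using dist.beta [of "subst t (lift s 0) (Suc k)" "subst u s k"]
    by (simp add: subst_subst [of 0 k, simplified])
qed auto

abbreviation dist_reds :: "dterm \<Rightarrow> dterm \<Rightarrow> bool" (infix "\<rightarrow>\<^sub>d\<^sup>*" 50) where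
  "t \<rightarrow>\<^sub>d\<^sup>* t' \<equiv> dist\<^sup>*\<^sup>* t t'"

lemma dist_reds_map:
  assumes "\<And>a b. a \<rightarrow>\<^sub>d b \<Longrightarrow> f a \<rightarrow>\<^sub>d f b" and "t \<rightarrow>\<^sub>d\<^sup>* t'"
  shows "f t \<rightarrow>\<^sub>d\<^sup>* f t'"
  using assms(2) by induct (auto intro: rtranclp.rtrancl_into_rtrancl assms(1))

lemma subst_dist_reds: "s \<rightarrow>\<^sub>d s' \<Longrightarrow> subst t s k \<rightarrow>\<^sub>d\<^sup>* subst t s' k"
proof (induct t arbitrary: s s' k)
  case (Lam t)
  then show ?case by (simp add: dist_reds_map lift_dist dist.lam)
next
  case (App t u)
  have "App (subst t s k) (subst u s k) \<rightarrow>\<^sub>d\<^sup>* App (subst t s' k) (subst u s k)"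
    using App by (intro dist_reds_map [where f = "\<lambda>x. App x _"]) auto
  also have "\<dots> \<rightarrow>\<^sub>d\<^sup>* App (subst t s' k) (subst u s' k)"
    using App by (intro dist_reds_map [where f = "App _"]) auto
  finally show ?case by simp
next
  case (Pair t u)
  have "Pair (subst t s k) (subst u s k) \<rightarrow>\<^sub>d\<^sup>* Pair (subst t s' k) (subst u s k)"
    using Pair by (intro dist_reds_map [where f = "\<lambda>x. Pair x _"]) auto
  also have "\<dots> \<rightarrow>\<^sub>d\<^sup>* Pair (subst t s' k) (subst u s' k)"
    using Pair by (intro dist_reds_map [where f = "Pair _"]) auto
  finally show ?case by simp
qed (auto simp: dist_reds_map dist.proj1c dist.proj2c)

inductive_cases dist_elims:
  "Var i \<rightarrow>\<^sub>d u"
  "Lam t \<rightarrow>\<^sub>d u"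
  "App t s \<rightarrow>\<^sub>d u"
  "Pair t s \<rightarrow>\<^sub>d u"
  "Proj1 t \<rightarrow>\<^sub>d u"
  "Proj2 t \<rightarrow>\<^sub>d u"

lemma Var_dist: "\<not> Var i \<rightarrow>\<^sub>d u"
  by (auto elim: dist_elims)

lemma Lam_dist: "Lam t \<rightarrow>\<^sub>d u \<longleftrightarrow> (\<exists>t'. t \<rightarrow>\<^sub>d t' \<and> u = Lam t')"
  by (auto elim: dist_elims)

lemma App_dist:
  "App t s \<rightarrow>\<^sub>d u \<longleftrightarrow>
    (\<exists>v. t = Lam v \<and> u = subst v s 0) \<or>
    (\<exists>x y. t = Pair x y \<and> u = Pair (App x s) (App y s)) \<or>
    (\<exists>t'. t \<rightarrow>\<^sub>d t' \<and> u = App t' s) \<or> (\<exists>s'. s \<rightarrow>\<^sub>d s' \<and> u = App t s')"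
  by (auto elim: dist_elims)

lemma Pair_dist:
  "Pair t s \<rightarrow>\<^sub>d u \<longleftrightarrow> (\<exists>t'. t \<rightarrow>\<^sub>d t' \<and> u = Pair t' s) \<or> (\<exists>s'. s \<rightarrow>\<^sub>d s' \<and> u = Pair t s')"
  by (auto elim: dist_elims)

definition proj :: "bool \<Rightarrow> dterm \<Rightarrow> dterm" where
  "proj b = (if b then Proj1 else Proj2)"

lemma proj_True [simp]: "proj True = Proj1"
  and proj_False [simp]: "proj False = Proj2"
  by (simp_all add: proj_def)

lemma proj_dist:
  "proj b t \<rightarrow>\<^sub>d u \<longleftrightarrow>
    (\<exists>x y. t = Pair x y \<and> u = (if b then x else y)) \<or>
    (\<exists>v. t = Lam v \<and> u = Lam (proj b v)) \<or> (\<exists>t'. t \<rightarrow>\<^sub>d t' \<and> u = proj b t')"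
  by (cases b) (auto elim: dist_elims)

lemma proj_dist_intros [intro]:
  "proj b (Pair x y) \<rightarrow>\<^sub>d (if b then x else y)"
  "proj b (Lam v) \<rightarrow>\<^sub>d Lam (proj b v)"
  "t \<rightarrow>\<^sub>d t' \<Longrightarrow> proj b t \<rightarrow>\<^sub>d proj b t'"
  by (auto simp: proj_dist)

lemma subst_proj [simp]: "subst (proj b t) s k = proj b (subst t s k)"
  by (cases b) simp_all

definition neutral :: "dterm \<Rightarrow> bool" where
  "neutral t \<longleftrightarrow> (\<forall>v. t \<noteq> Lam v) \<and> (\<forall>x y. t \<noteq> Pair x y)"

lemma neutral_simps [simp]:
  "neutral (Var i)" "neutral (App t s)" "neutral (proj b t)"
  by (simp_all add: neutral_def proj_def)

lemma App_dist_neutral: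
  "neutral t \<Longrightarrow>
    App t s \<rightarrow>\<^sub>d u \<longleftrightarrow> (\<exists>t'. t \<rightarrow>\<^sub>d t' \<and> u = App t' s) \<or> (\<exists>s'. s \<rightarrow>\<^sub>d s' \<and> u = App t s')"
  by (auto simp: App_dist neutral_def)

lemma proj_dist_neutral: "neutral t \<Longrightarrow> proj b t \<rightarrow>\<^sub>d u \<longleftrightarrow> (\<exists>t'. t \<rightarrow>\<^sub>d t' \<and> u = proj b t')"
  by (auto simp: proj_dist neutral_def)

lemma SN_intro: "(\<And>t'. t \<rightarrow>\<^sub>d t' \<Longrightarrow> t' \<in> SN) \<Longrightarrow> t \<in> SN"
  unfolding SN_def by (rule accI) auto

lemma SN_dist: "t \<in> SN \<Longrightarrow> t \<rightarrow>\<^sub>d t' \<Longrightarrow> t' \<in> SN"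
  unfolding SN_def by (erule acc_downward) simp

lemma SN_induct [consumes 1, case_names step]:
  assumes "t \<in> SN"
    and "\<And>t. t \<in> SN \<Longrightarrow> (\<And>t'. t \<rightarrow>\<^sub>d t' \<Longrightarrow> P t') \<Longrightarrow> P t"
  shows "P t"
  using assms(1) unfolding SN_def
proof (induct rule: acc.induct)
  case (accI t)
  show ?case
  proof (rule assms(2))
    show "t \<in> SN" unfolding SN_def using accI(1) by (rule acc.accI)
    show "P t'" if "t \<rightarrow>\<^sub>d t'" for t' using accI(2) that by simp
  qed
qed

lemma SN_induct2 [consumes 2, case_names step]:
  assumes "t \<in> SN" and "s \<in> SN"
    and "\<And>t s. t \<in> SN \<Longrightarrow> s \<in> SN \<Longrightarrow>
      (\<And>t'. t \<rightarrow>\<^sub>d t' \<Longrightarrow> P t' s) \<Longrightarrow> (\<And>s'. s \<rightarrow>\<^sub>d s' \<Longrightarrow> P t s') \<Longrightarrow> P t s"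
  shows "P t s"
  using assms(1,2)
proof (induct t arbitrary: s rule: SN_induct)
  case (step t)
  note t = step(1) and IH_t = step(2)
  from step(3) show ?case
  proof (induct rule: SN_induct)
    case (step s)
    show ?case
      by (rule assms(3) [OF t step(1)]) (simp_all add: IH_t step)
  qed
qed

lemma SN_preimage:
  assumes "f t \<in> SN" and "\<And>a b. a \<rightarrow>\<^sub>d b \<Longrightarrow> f a \<rightarrow>\<^sub>d f b"
  shows "t \<in> SN"
proof -
  have "\<forall>t. u = f t \<longrightarrow> t \<in> SN" if "u \<in> SN" for u
    using that by (induct rule: SN_induct) (blast intro: SN_intro assms(2))
  with assms(1) show ?thesis by blast
qed

definition candidate :: "dterm set \<Rightarrow> bool" where
  "candidate X \<longleftrightarrow> X \<subseteq> SN \<and> (\<forall>t t'. t \<in> X \<longrightarrow> t \<rightarrow>\<^sub>d t' \<longrightarrow> t' \<in> X) \<and>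
    (\<forall>t. neutral t \<longrightarrow> (\<forall>t'. t \<rightarrow>\<^sub>d t' \<longrightarrow> t' \<in> X) \<longrightarrow> t \<in> X)"

lemma candidateI:
  assumes "X \<subseteq> SN" and "\<And>t t'. t \<in> X \<Longrightarrow> t \<rightarrow>\<^sub>d t' \<Longrightarrow> t' \<in> X"
    and "\<And>t. neutral t \<Longrightarrow> (\<And>t'. t \<rightarrow>\<^sub>d t' \<Longrightarrow> t' \<in> X) \<Longrightarrow> t \<in> X"
  shows "candidate X"
  using assms unfolding candidate_def by blast

lemma
  assumes "candidate X"
  shows candidateD_SN: "t \<in> X \<Longrightarrow> t \<in> SN"
    and candidateD_dist: "t \<in> X \<Longrightarrow> t \<rightarrow>\<^sub>d t' \<Longrightarrow> t' \<in> X"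
    and candidateD_neutral: "neutral t \<Longrightarrow> (\<And>t'. t \<rightarrow>\<^sub>d t' \<Longrightarrow> t' \<in> X) \<Longrightarrow> t \<in> X"
  using assms unfolding candidate_def by blast+

lemma candidate_Var: "candidate X \<Longrightarrow> Var i \<in> X"
  by (rule candidateD_neutral) (simp_all add: Var_dist)

lemma candidate_SN: "candidate SN"
proof (rule candidateI)
  fix t t' assume "t \<in> SN" "t \<rightarrow>\<^sub>d t'"
  then show "t' \<in> SN" by (rule SN_dist)
next
  fix t assume "\<And>t'. t \<rightarrow>\<^sub>d t' \<Longrightarrow> t' \<in> SN"
  then show "t \<in> SN" by (rule SN_intro)
qed simp

lemma candidate_Arr:
  assumes X: "candidate X" and Y: "candidate Y"
  shows "candidate {t. \<forall>s\<in>X. App t s \<in> Y}" (is "candidate ?F")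
proof (rule candidateI)
  show "?F \<subseteq> SN"
  proof
    fix t assume "t \<in> ?F"
    then have "App t (Var 0) \<in> SN"
      using candidate_Var [OF X] candidateD_SN [OF Y] by blast
    then show "t \<in> SN" by (rule SN_preimage) (rule dist.appL)
  qed
next
  fix t t' assume "t \<in> ?F" "t \<rightarrow>\<^sub>d t'"
  then show "t' \<in> ?F" using candidateD_dist [OF Y] dist.appL by blast
next
  fix t assume t: "neutral t" and reducts: "\<And>t'. t \<rightarrow>\<^sub>d t' \<Longrightarrow> t' \<in> ?F"
  have "App t s \<in> Y" if "s \<in> SN" "s \<in> X" for s
    using that
  proof (induct rule: SN_induct)
    case (step s)
    show ?case
    proof (rule candidateD_neutral [OF Y])
      fix u assume "App t s \<rightarrow>\<^sub>d u"
      then consider t' where "t \<rightarrow>\<^sub>d t'" "u = App t' s" | s' where "s \<rightarrow>\<^sub>d s'" "u = App t s'"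
        using t by (auto simp: App_dist_neutral)
      then show "u \<in> Y"
      proof cases
        case 1
        then show ?thesis using reducts step(3) by auto
      next
        case 2
        then show ?thesis using step(2) candidateD_dist [OF X step(3)] by auto
      qed
    qed simp
  qed
  then show "t \<in> ?F" using candidateD_SN [OF X] by blast
qed

lemma candidate_And:
  assumes X: "candidate X" and Y: "candidate Y"
  shows "candidate {t. Proj1 t \<in> X \<and> Proj2 t \<in> Y}" (is "candidate ?F")
proof (rule candidateI)
  show "?F \<subseteq> SN"
  proof
    fix t assume "t \<in> ?F"
    then have "Proj1 t \<in> SN" using candidateD_SN [OF X] by blast
    then show "t \<in> SN" by (rule SN_preimage) (rule dist.proj1c)
  qed
next
  fix t t' assume "t \<in> ?F" "t \<rightarrow>\<^sub>d t'"
  then show "t' \<in> ?F"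
    using candidateD_dist [OF X] candidateD_dist [OF Y] dist.proj1c dist.proj2c by blast
next
  fix t assume t: "neutral t" and reducts: "\<And>t'. t \<rightarrow>\<^sub>d t' \<Longrightarrow> t' \<in> ?F"
  have "proj b t \<in> Z" if Z: "candidate Z" and "\<And>t'. t \<rightarrow>\<^sub>d t' \<Longrightarrow> proj b t' \<in> Z" for b Z
  proof (rule candidateD_neutral [OF Z])
    fix u assume "proj b t \<rightarrow>\<^sub>d u"
    then obtain t' where "t \<rightarrow>\<^sub>d t'" "u = proj b t'"
      using t by (auto simp: proj_dist_neutral)
    with that(2) show "u \<in> Z" by simp
  qed simp
  from this [of X True] this [of Y False] show "t \<in> ?F"
    using X Y reducts by simp
qed

lemma candidate_interp: "candidate (interp A)"
  by (induct A) (simp_all add: candidate_SN candidate_Arr candidate_And)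

lemmas interp_SN = candidateD_SN [OF candidate_interp]
  and interp_dist = candidateD_dist [OF candidate_interp]
  and interp_neutral = candidateD_neutral [OF candidate_interp]

lemma interp_dist_reds: "t \<rightarrow>\<^sub>d\<^sup>* t' \<Longrightarrow> t \<in> interp A \<Longrightarrow> t' \<in> interp A"
  by (induct rule: rtranclp_induct) (simp_all add: interp_dist)

lemma App_Lam_in_interp:
  assumes "s \<in> SN" and "subst u s 0 \<in> interp B"
  shows "App (Lam u) s \<in> interp B"
proof -
  have "u \<in> SN" using interp_SN [OF assms(2)] by (rule SN_preimage) (rule subst_dist)
  then show ?thesis using assms
  proof (induct u s rule: SN_induct2)
    case (step u s)
    show ?case
    proof (rule interp_neutral)
      fix w assume "App (Lam u) s \<rightarrow>\<^sub>d w"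
      then consider "w = subst u s 0"
        | u' where "u \<rightarrow>\<^sub>d u'" "w = App (Lam u') s"
        | s' where "s \<rightarrow>\<^sub>d s'" "w = App (Lam u) s'"
        by (auto simp: App_dist Lam_dist)
      then show "w \<in> interp B"
      proof cases
        case 1
        with step show ?thesis by simp
      next
        case (2 u')
        with step(3,5) show ?thesis by (simp add: interp_dist subst_dist)
      next
        case (3 s')
        have "subst u s' 0 \<in> interp B"
          using subst_dist_reds [OF 3(1)] step(5) by (rule interp_dist_reds)
        with 3 step(4) show ?thesis by simp
      qed
    qed simp
  qed
qed

lemma proj_Pair_in_interp:
  assumes "x \<in> SN" and "y \<in> SN" and "(if b then x else y) \<in> interp B"
  shows "proj b (Pair x y) \<in> interp B"
  using assms
proof (induct x y rule: SN_induct2)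
  case (step x y)
  show ?case
  proof (rule interp_neutral)
    fix w assume "proj b (Pair x y) \<rightarrow>\<^sub>d w"
    then consider "w = (if b then x else y)"
      | x' where "x \<rightarrow>\<^sub>d x'" "w = proj b (Pair x' y)"
      | y' where "y \<rightarrow>\<^sub>d y'" "w = proj b (Pair x y')"
      by (auto simp: proj_dist Pair_dist)
    then show "w \<in> interp B"
    proof cases
      case 1
      with step show ?thesis by simp
    next
      case (2 x')
      with step(3,5) show ?thesis by (cases b) (simp_all add: interp_dist)
    next
      case (3 y')
      with step(4,5) show ?thesis by (cases b) (simp_all add: interp_dist)
    qed
  qed simp
qed

lemma App_proj_in_interp:
  assumes "proj b (App t s) \<in> interp B"
  shows "App (proj b t) s \<in> interp B"
proof -
  have "App t s \<in> SN" using interp_SN [OF assms] by (rule SN_preimage) blast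
  then have "t \<in> SN" and "s \<in> SN" by (auto elim: SN_preimage)
  then show ?thesis using assms
  proof (induct t s rule: SN_induct2)
    case (step t s)
    show ?case
    proof (rule interp_neutral)
      fix w assume "App (proj b t) s \<rightarrow>\<^sub>d w"
      then consider q where "proj b t \<rightarrow>\<^sub>d q" "w = App q s"
        | s' where "s \<rightarrow>\<^sub>d s'" "w = App (proj b t) s'"
        by (auto simp: App_dist_neutral)
      then show "w \<in> interp B"
      proof cases
        case (1 q)
        from 1(1) consider x y where "t = Pair x y" "q = (if b then x else y)"
          | v where "t = Lam v" "q = Lam (proj b v)"
          | t' where "t \<rightarrow>\<^sub>d t'" "q = proj b t'"
          by (auto simp: proj_dist)
        then show ?thesis
        proof cases
          case (1 x y)
          have "proj b (App t s) \<rightarrow>\<^sub>d proj b (Pair (App x s) (App y s))"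
            using 1 by blast
          moreover have "proj b (Pair (App x s) (App y s)) \<rightarrow>\<^sub>d w"
            using 1 \<open>w = App q s\<close> by (cases b) auto
          ultimately show ?thesis using step(5) by (blast intro: interp_dist)
        next
          case (2 v)
          have "proj b (App t s) \<rightarrow>\<^sub>d subst (proj b v) s 0"
            using 2 by auto
          with step(5) have "subst (proj b v) s 0 \<in> interp B" by (rule interp_dist)
          then show ?thesis using 2 \<open>w = App q s\<close> step(2) by (simp add: App_Lam_in_interp)
        next
          case (3 t')
          have "proj b (App t' s) \<in> interp B"
            using step(5) by (rule interp_dist) (use 3 in blast)
          with 3 step(3) \<open>w = App q s\<close> show ?thesis by simp
        qed
      next
        case (2 s')
        have "proj b (App t s') \<in> interp B"
          using step(5) by (rule interp_dist) (use 2 in blast)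
        with 2 step(4) show ?thesis by simp
      qed
    qed simp
  qed
qed

text \<open>The other component matters only for strong normalisation of the reduct
  \<open>\<pi>\<^sub>i \<langle>t\<^sub>1 s, t\<^sub>2 s\<rangle>\<close>.\<close>
lemma proj_App_in_interp:
  assumes "App (proj b t) s \<in> interp B" and "App (proj (\<not> b) t) s \<in> SN"
  shows "proj b (App t s) \<in> interp B"
proof -
  have "proj b t \<in> SN" and "s \<in> SN"
    using interp_SN [OF assms(1)] by (auto elim: SN_preimage)
  then have "t \<in> SN" and "s \<in> SN" by (auto elim: SN_preimage)
  then show ?thesis using assms
  proof (induct t s rule: SN_induct2)
    case (step t s)
    show ?case
    proof (rule interp_neutral)
      fix w assume "proj b (App t s) \<rightarrow>\<^sub>d w"
      then obtain p where "App t s \<rightarrow>\<^sub>d p" "w = proj b p"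
        by (auto simp: proj_dist_neutral)
      then consider v where "t = Lam v" "w = proj b (subst v s 0)"
        | x y where "t = Pair x y" "w = proj b (Pair (App x s) (App y s))"
        | t' where "t \<rightarrow>\<^sub>d t'" "w = proj b (App t' s)"
        | s' where "s \<rightarrow>\<^sub>d s'" "w = proj b (App t s')"
        by (auto simp: App_dist)
      then show "w \<in> interp B"
      proof cases
        case (1 v)
        have "App (proj b t) s \<rightarrow>\<^sub>d App (Lam (proj b v)) s"
          using 1 by blast
        moreover have "App (Lam (proj b v)) s \<rightarrow>\<^sub>d w"
          using 1 dist.beta [of "proj b v" s] by simp
        ultimately show ?thesis using step(5) by (blast intro: interp_dist)
      next
        case (2 x y)
        have B: "App (if b then x else y) s \<in> interp B"
          using step(5) by (rule interp_dist) (use 2 in blast)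
        have "App (if b then y else x) s \<in> SN"
          using step(6) by (rule SN_dist) (use 2 in \<open>cases b; auto\<close>)
        with interp_SN [OF B] have "App x s \<in> SN" "App y s \<in> SN"
          by (cases b; simp)+
        moreover have "(if b then App x s else App y s) \<in> interp B"
          using B by (cases b) simp_all
        ultimately show ?thesis using 2 by (simp add: proj_Pair_in_interp)
      next
        case (3 t')
        have "App (proj b t') s \<in> interp B"
          using step(5) by (rule interp_dist) (use 3 in blast)
        moreover have "App (proj (\<not> b) t') s \<in> SN"
          using step(6) by (rule SN_dist) (use 3 in blast)
        ultimately show ?thesis using 3 step(3) by simp
      next
        case (4 s')
        have "App (proj b t) s' \<in> interp B"
          using step(5) by (rule interp_dist) (use 4 in blast)
        moreover have "App (proj (\<not> b) t) s' \<in> SN"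
          using step(6) by (rule SN_dist) (use 4 in blast)
        ultimately show ?thesis using 4 step(4) by simp
      qed
    qed simp
  qed
qed

lemma interp_Arr_And: "interp (Arr A (And B C)) = interp (And (Arr A B) (Arr A C))"
proof (intro set_eqI iffI)
  fix t assume t: "t \<in> interp (Arr A (And B C))"
  show "t \<in> interp (And (Arr A B) (Arr A C))"
  proof (simp, intro conjI ballI)
    fix s assume "s \<in> interp A"
    with t have 1: "Proj1 (App t s) \<in> interp B" and 2: "Proj2 (App t s) \<in> interp C"
      by simp_all
    show "App (Proj1 t) s \<in> interp B"
      by (rule App_proj_in_interp [of True, simplified, OF 1])
    show "App (Proj2 t) s \<in> interp C"
      by (rule App_proj_in_interp [of False, simplified, OF 2])
  qed
next
  fix t assume t: "t \<in> interp (And (Arr A B) (Arr A C))"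
  show "t \<in> interp (Arr A (And B C))"
  proof (simp, intro ballI conjI)
    fix s assume "s \<in> interp A"
    with t have 1: "App (Proj1 t) s \<in> interp B" and 2: "App (Proj2 t) s \<in> interp C"
      by simp_all
    show "Proj1 (App t s) \<in> interp B"
      by (rule proj_App_in_interp [of True, simplified, OF 1 interp_SN [OF 2]])
    show "Proj2 (App t s) \<in> interp C"
      by (rule proj_App_in_interp [of False, simplified, OF 2 interp_SN [OF 1]])
  qed
qed

lemma teq_interp: "teq A B \<Longrightarrow> interp A = interp B"
proof (induct rule: teq.induct)
  case (dist_ax A B C)
  show ?case by (rule interp_Arr_And)
qed simp_all

lemma Lam_in_interp:
  assumes "\<And>s. s \<in> interp A \<Longrightarrow> subst u s 0 \<in> interp B"
  shows "Lam u \<in> interp (Arr A B)"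
  using assms by (simp add: App_Lam_in_interp interp_SN)

lemma Pair_in_interp:
  assumes "x \<in> interp A" and "y \<in> interp B"
  shows "Pair x y \<in> interp (And A B)"
  using proj_Pair_in_interp [of x y True A] proj_Pair_in_interp [of x y False B] assms
  by (simp add: interp_SN)

lemma valid_Cons: "valid \<theta> \<Gamma> \<Longrightarrow> s \<in> interp A \<Longrightarrow> valid (case_nat s \<theta>) (A # \<Gamma>)"
  by (auto simp: valid_def less_Suc_eq_0_disj)

theorem lemma8:
  assumes "typing \<Gamma> t A"
    and "valid \<theta> \<Gamma>"
  shows "substs \<theta> t \<in> interp A"
  using assms
proof (induct arbitrary: \<theta> rule: typing.induct)
  case (ax i \<Gamma> A)
  then show ?case by (auto simp: valid_def)
next
  case (conv \<Gamma> t A B)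
  then show ?case by (simp add: teq_interp [symmetric])
next
  case (abs A \<Gamma> t B)
  let ?u = "substs (case_nat (Var 0) (\<lambda>j. lift (\<theta> j) 0)) t"
  have "subst ?u s 0 \<in> interp B" if "s \<in> interp A" for s
    using abs(2) [OF valid_Cons [OF abs(3) that]] by (simp add: subst_substs_lifted)
  then have "Lam ?u \<in> interp (Arr A B)" by (rule Lam_in_interp)
  then show ?case by simp
next
  case (pair \<Gamma> t A s B)
  then have "Pair (substs \<theta> t) (substs \<theta> s) \<in> interp (And A B)"
    by (simp only: Pair_in_interp)
  then show ?case by simp
qed simp_all

end
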